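(* Let $-\tfrac1{13}<s<0$, $N\gg1$ and $0<\gamma_0<2^{-30}$. Then for every function $u$ on $\mathbb{R}^2$ with $Iu\in L^2(\mathbb{R}^2)$, $$|\Lambda_3(\tilde\sigma_3;u,u,u)|\lesssim \gamma_0^{-1}N^{-1+}\|Iu\|_{L^2(\mathbb{R}^2)}^3,$$ with implicit constant independent of $N$ and $\gamma_0$.
   Context: For $s<0$ and $N\ge1$, $m=m_N^s$ is a smooth radial function, non-increasing in $|\zeta|$, with $m(\zeta)=1$ for $|\zeta|\le N$ and $m(\zeta)=(|\zeta|/N)^s$ for $|\zeta|\ge 2N$; $\widehat{Iu}(\zeta)=m(\zeta)\hat u(\zeta)$. For $M:\mathbb{R}^{2k}\to\mathbb{C}$, $\Lambda_k(M;u_1,\dots,u_k)=\int_{\zeta_1+\cdots+\zeta_k=0}M(\zeta_1,\dots,\zeta_k)\hat u_1(\zeta_1)\cdots\hat u_k(\zeta_k)$. For $\zeta_j=(\xi_j,\eta_j)$, $N_j$ is the smallest dyadic number $2^n$ ($n\ge0$) with $|\zeta_j|\le N_j$. $M_3=\sum_{j=1}^3m^2(\zeta_j)(\xi_j+\eta_j)$, $h_3=3i(\xi_1\xi_2\xi_3+\eta_1\eta_2\eta_3)$, $\Omega_{nr}=\{\sum\zeta_j=0,\ \max_j|\zeta_j|\le N\}\cup\{\sum\zeta_j=0,\ |\xi_1\xi_2\xi_3+\eta_1\eta_2\eta_3|\ge\gamma_0N_1N_2N_3\}$, $\tilde\sigma_3=-\frac{2iM_3}{3h_3}\mathbf 1_{\Omega_{nr}}$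 (zero where $M_3=0$). $N^{c+}$ means $N^{c+\varepsilon}$ for arbitrary small $\varepsilon>0$, constants depending on $\varepsilon$. *)

theory Defs
  imports "HOL-Analysis.Analysis"
begin

type_synonym freq = "real \<times> real"

definition admissible_profile :: "real \<Rightarrow> (real \<Rightarrow> real) \<Rightarrow> bool" where
  "admissible_profile s \<mu> \<longleftrightarrow>
     (\<forall>k. \<forall>x. ((deriv ^^ k) \<mu>) differentiable (at x)) \<and>
     (\<forall>r. 0 \<le> r \<and> r \<le> 1 \<longrightarrow> \<mu> r = 1) \<and>
     (\<forall>r. 2 \<le> r \<longrightarrow> \<mu> r = r powr s) \<and>
     (\<forall>r t. 0 \<le> r \<and> r \<le> t \<longrightarrow> \<mu> t \<le> \<mu> r)"

definition mI :: "(real \<Rightarrow> real) \<Rightarrow> real \<Rightarrow> freq \<Rightarrow> real" where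
  "mI \<mu> N \<zeta> = \<mu> (norm \<zeta> / N)"

definition dyad :: "real \<Rightarrow> real" where
  "dyad r = 2 ^ (LEAST n::nat. r \<le> 2 ^ n)"

definition M3 :: "(freq \<Rightarrow> real) \<Rightarrow> freq \<Rightarrow> freq \<Rightarrow> freq \<Rightarrow> real" where
  "M3 m z1 z2 z3 = (\<Sum>z\<leftarrow>[z1, z2, z3]. (m z)^2 * (fst z + snd z))"

definition h3 :: "freq \<Rightarrow> freq \<Rightarrow> freq \<Rightarrow> complex" where
  "h3 z1 z2 z3 = 3 * \<i> * complex_of_real
      (fst z1 * fst z2 * fst z3 + snd z1 * snd z2 * snd z3)"

definition Omega_nr :: "real \<Rightarrow> real \<Rightarrow> (freq \<times> freq \<times> freq) set" where
  "Omega_nr N \<gamma>0 =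
     {(z1, z2, z3). z1 + z2 + z3 = 0 \<and> max (norm z1) (max (norm z2) (norm z3)) \<le> N}
   \<union> {(z1, z2, z3). z1 + z2 + z3 = 0 \<and>
        \<bar>fst z1 * fst z2 * fst z3 + snd z1 * snd z2 * snd z3\<bar>
          \<ge> \<gamma>0 * dyad (norm z1) * dyad (norm z2) * dyad (norm z3)}"

text \<open>\<sigma>~_3 = -2i M_3/(3 h_3) on \<Omega>_nr, 0 elsewhere (division by zero gives 0, which
  only happens where M_3 = 0 on \<Omega>_nr).\<close>
definition sigma3 :: "(freq \<Rightarrow> real) \<Rightarrow> real \<Rightarrow> real \<Rightarrow> freq \<Rightarrow> freq \<Rightarrow> freq \<Rightarrow> complex" where
  "sigma3 m N \<gamma>0 z1 z2 z3 =
     (if (z1, z2, z3) \<in> Omega_nr N \<gamma>0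
      then - 2 * \<i> * complex_of_real (M3 m z1 z2 z3) / (3 * h3 z1 z2 z3) else 0)"

text \<open>\<Lambda>_3(M; f1,f2,f3) given the Fourier transforms f_j = u_j^, integrated over the hyperplane
  \<zeta>1+\<zeta>2+\<zeta>3 = 0 parametrised by (\<zeta>1, \<zeta>2).\<close>
definition Lambda3_integrand ::
  "(freq \<Rightarrow> freq \<Rightarrow> freq \<Rightarrow> complex) \<Rightarrow> (freq \<Rightarrow> complex) \<Rightarrow> (freq \<Rightarrow> complex)
     \<Rightarrow> (freq \<Rightarrow> complex) \<Rightarrow> freq \<times> freq \<Rightarrow> complex" where
  "Lambda3_integrand M f1 f2 f3 = (\<lambda>(z1, z2). M z1 z2 (- z1 - z2) * f1 z1 * f2 z2 * f3 (- z1 - z2))"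

definition Lambda3 ::
  "(freq \<Rightarrow> freq \<Rightarrow> freq \<Rightarrow> complex) \<Rightarrow> (freq \<Rightarrow> complex) \<Rightarrow> (freq \<Rightarrow> complex)
     \<Rightarrow> (freq \<Rightarrow> complex) \<Rightarrow> complex" where
  "Lambda3 M f1 f2 f3 = integral\<^sup>L lborel (Lambda3_integrand M f1 f2 f3)"

text \<open>\<parallel>Iu\<parallel>_{L^2} expressed on the Fourier side (Plancherel): \<parallel>m u^\<parallel>_{L^2}.\<close>
definition L2norm_I :: "(freq \<Rightarrow> real) \<Rightarrow> (freq \<Rightarrow> complex) \<Rightarrow> real" where
  "L2norm_I m f = sqrt (\<integral>z. (norm (complex_of_real (m z) * f z))^2 \<partial>lborel)"

end

theory Submission
  imports Defs
begin

text \<open>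
  Write <x> = max 1 |x|. On the non-resonant set either all three frequencies lie in the ball of
  radius N, where m = 1 and M_3 vanishes because the frequencies sum to zero, or
  |\<xi>1\<xi>2\<xi>3 + \<eta>1\<eta>2\<eta>3| \<ge> \<gamma>0 N1 N2 N3 \<ge> \<gamma>0 <\<zeta>1><\<zeta>2><\<zeta>3>, so that |\<sigma>3| is at most
  \<gamma>0^-1 times the sum of the terms m(\<zeta>j)^2 / (<\<zeta>k><\<zeta>l>). One of \<zeta>k, \<zeta>l then has size > N/2,
  and since m(\<zeta>)^2 \<ge> (|\<zeta>|/N)^(2s) / 4 decays more slowly than <\<zeta>>^(\<epsilon>-1) (here 2s > \<epsilon> - 1),
  each term is at most 8 N^(\<epsilon>-1) m(\<zeta>1) m(\<zeta>2) m(\<zeta>3) <\<zeta>>^(-1-\<epsilon>) for one of the two frequencies.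
  Finally <\<zeta>>^(-1-\<epsilon>) \<le> \<psi>(\<zeta>) = (<\<xi>><\<eta>>)^(-(1+\<epsilon>)/2), which is square integrable, and for
  F = m |u^| the trilinear form of such a symbol is controlled by Young and Cauchy-Schwarz:
  \<integral>\<integral> (\<psi>F)(\<zeta>1) F(\<zeta>2) F(-\<zeta>1-\<zeta>2) \<le> 2 \<parallel>F\<parallel>_2^2 \<parallel>\<psi>F\<parallel>_1 \<le> 2 \<parallel>\<psi>\<parallel>_2 \<parallel>F\<parallel>_2^3.
\<close>

lemma borel_measurable_fst [measurable]:
  "(fst :: 'a::topological_space \<times> 'b::topological_space \<Rightarrow> 'a) \<in> borel \<rightarrow>\<^sub>M borel"
  by (intro borel_measurable_continuous_onI continuous_intros)

lemma borel_measurable_snd [measurable]: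
  "(snd :: 'a::topological_space \<times> 'b::topological_space \<Rightarrow> 'b) \<in> borel \<rightarrow>\<^sub>M borel"
  by (intro borel_measurable_continuous_onI continuous_intros)

lemma nn_integral_lborel_reflect:
  fixes t :: "'a::euclidean_space" and g :: "'a \<Rightarrow> ennreal"
  assumes [measurable]: "g \<in> borel_measurable borel"
  shows "(\<integral>\<^sup>+x. g (t - x) \<partial>lborel) = (\<integral>\<^sup>+x. g x \<partial>lborel)"
  by (subst lborel_affine[of "-1" t]) (simp_all add: nn_integral_density nn_integral_distr)

lemma nn_integral_lborel_pair:
  fixes h :: "'a::euclidean_space \<times> 'b::euclidean_space \<Rightarrow> ennreal"
  assumes "h \<in> borel_measurable borel"
  shows "(\<integral>\<^sup>+p. h p \<partial>lborel) = (\<integral>\<^sup>+x. \<integral>\<^sup>+y. h (x, y) \<partial>lborel \<partial>lborel)"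
  using assms by (simp add: lborel.nn_integral_fst lborel_prod)

lemma nn_integral_lborel_tensor:
  fixes f :: "'a::euclidean_space \<Rightarrow> ennreal" and g :: "'b::euclidean_space \<Rightarrow> ennreal"
  assumes [measurable]: "f \<in> borel_measurable borel" "g \<in> borel_measurable borel"
  shows "(\<integral>\<^sup>+p. f (fst p) * g (snd p) \<partial>lborel) = (\<integral>\<^sup>+x. f x \<partial>lborel) * (\<integral>\<^sup>+y. g y \<partial>lborel)"
  by (subst nn_integral_lborel_pair) (simp_all add: nn_integral_cmult nn_integral_multc)

lemma nn_integral_lborel_pair_swap:
  fixes h :: "'a::euclidean_space \<times> 'a \<Rightarrow> ennreal"
  assumes [measurable]: "h \<in> borel_measurable borel"
  shows "(\<integral>\<^sup>+p. h (snd p, fst p) \<partial>lborel) = (\<integral>\<^sup>+p. h p \<partial>lborel)"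
proof -
  have "(\<integral>\<^sup>+p. h (snd p, fst p) \<partial>lborel) = (\<integral>\<^sup>+y. \<integral>\<^sup>+x. h (x, y) \<partial>lborel \<partial>lborel)"
    by (subst nn_integral_lborel_pair) simp_all
  also have "\<dots> = (\<integral>\<^sup>+p. h p \<partial>lborel)"
    by (subst lborel_pair.Fubini') (simp_all add: lborel_prod nn_integral_lborel_pair)
  finally show ?thesis .
qed

lemma nn_integral_lborel_pair_shear:
  fixes h :: "'a::euclidean_space \<times> 'a \<Rightarrow> ennreal"
  assumes [measurable]: "h \<in> borel_measurable borel"
  shows "(\<integral>\<^sup>+p. h (fst p, - fst p - snd p) \<partial>lborel) = (\<integral>\<^sup>+p. h p \<partial>lborel)"
proof -
  have "(\<integral>\<^sup>+y. h (x, - x - y) \<partial>lborel) = (\<integral>\<^sup>+y. h (x, y) \<partial>lborel)" for x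
    using nn_integral_lborel_reflect[of "\<lambda>y. h (x, y)" "- x"] by simp
  then show ?thesis
    by (subst (1 2) nn_integral_lborel_pair) simp_all
qed

lemma nn_integral_max_one_abs_powr_finite:
  fixes e :: real
  assumes "e < -1"
  shows "(\<integral>\<^sup>+x. ennreal (max 1 \<bar>x\<bar> powr e) \<partial>lborel) < \<infinity>"
proof -
  define h where "h x = ennreal (indicator {1..} x * x powr e)" for x :: real
  have [measurable]: "h \<in> borel_measurable borel"
    unfolding h_def by measurable
  have tail: "(\<integral>\<^sup>+x. h x \<partial>lborel) = ennreal (- (1 powr (e + 1)) / (e + 1))"
    unfolding h_def
    by (rule nn_integral_has_integral_lebesgue[OF _ has_integral_powr_to_inf[OF assms]]) auto
  have "(\<integral>\<^sup>+x. ennreal (max 1 \<bar>x\<bar> powr e) \<partial>lborel)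
      \<le> (\<integral>\<^sup>+x. indicator {-1..1} x + h x + h (0 - x) \<partial>lborel)"
    by (intro nn_integral_mono) (auto simp: h_def indicator_def)
  also have "\<dots> = 2 + 2 * (\<integral>\<^sup>+x. h x \<partial>lborel)"
    using nn_integral_lborel_reflect[of h 0] by (simp add: nn_integral_add mult_2 add.assoc)
  also have "\<dots> < \<infinity>"
    using tail by (simp add: ennreal_mult_less_top)
  finally show ?thesis .
qed

lemma nn_integral_mult_le_sqrt_integrals:
  fixes f g :: "'a \<Rightarrow> real"
  assumes [measurable]: "f \<in> borel_measurable M" "g \<in> borel_measurable M"
    and nonneg: "\<And>x. 0 \<le> f x" "\<And>x. 0 \<le> g x"
    and square_integrable: "integrable M (\<lambda>x. f x ^ 2)" "integrable M (\<lambda>x. g x ^ 2)"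
  shows "(\<integral>\<^sup>+x. ennreal (f x * g x) \<partial>M)
    \<le> ennreal (sqrt (\<integral>x. f x ^ 2 \<partial>M) * sqrt (\<integral>x. g x ^ 2 \<partial>M))"
proof -
  define F G where "F = (\<integral>x. f x ^ 2 \<partial>M)" and "G = (\<integral>x. g x ^ 2 \<partial>M)"
  have FG: "0 \<le> F" "0 \<le> G"
    by (simp_all add: F_def G_def)
  have "(\<integral>\<^sup>+x. ennreal (f x) ^ 2 \<partial>M) = ennreal F" "(\<integral>\<^sup>+x. ennreal (g x) ^ 2 \<partial>M) = ennreal G"
    using nn_integral_eq_integral[OF square_integrable(1)] nn_integral_eq_integral[OF square_integrable(2)]
    by (simp_all add: F_def G_def ennreal_power nonneg)
  then have "(\<integral>\<^sup>+x. ennreal (f x) * ennreal (g x) \<partial>M)\<^sup>2 \<le> ennreal (F * G)"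
    using Cauchy_Schwarz_nn_integral[of "\<lambda>x. ennreal (f x)" M "\<lambda>x. ennreal (g x)"] FG
    by (simp add: ennreal_mult)
  moreover obtain r where r: "(\<integral>\<^sup>+x. ennreal (f x) * ennreal (g x) \<partial>M) = ennreal r" "0 \<le> r"
    using calculation FG
    by (cases "(\<integral>\<^sup>+x. ennreal (f x) * ennreal (g x) \<partial>M)") (auto simp: ennreal_mult[symmetric] top_unique)
  ultimately have "r\<^sup>2 \<le> F * G"
    using FG by (simp add: ennreal_power ennreal_le_iff)
  then have "r \<le> sqrt F * sqrt G"
    by (simp add: real_le_rsqrt real_sqrt_mult[symmetric])
  then show ?thesis
    using r nonneg by (simp add: F_def G_def ennreal_mult[symmetric])
qed

lemma nn_integral_mult_reflect_le:
  fixes B :: "'a::euclidean_space \<Rightarrow> ennreal"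
  assumes [measurable]: "B \<in> borel_measurable borel"
  shows "(\<integral>\<^sup>+z. B z * B (t - z) \<partial>lborel) \<le> 2 * (\<integral>\<^sup>+z. B z ^ 2 \<partial>lborel)"
proof -
  have "a * b \<le> a\<^sup>2 + b\<^sup>2" for a b :: ennreal
  proof (cases "a \<le> b")
    case True
    then have "a * b \<le> b\<^sup>2"
      by (simp add: power2_eq_square mult_right_mono)
    then show ?thesis
      by (simp add: add_increasing)
  next
    case False
    then have "a * b \<le> a\<^sup>2"
      by (simp add: power2_eq_square mult_left_mono)
    then show ?thesis
      by (simp add: add_increasing2)
  qed
  then have "(\<integral>\<^sup>+z. B z * B (t - z) \<partial>lborel) \<le> (\<integral>\<^sup>+z. B z ^ 2 + B (t - z) ^ 2 \<partial>lborel)"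
    by (intro nn_integral_mono)
  also have "\<dots> = 2 * (\<integral>\<^sup>+z. B z ^ 2 \<partial>lborel)"
    using nn_integral_lborel_reflect[of "\<lambda>z. B z ^ 2" t] by (simp add: nn_integral_add mult_2)
  finally show ?thesis .
qed

lemma nn_integral_trilinear_le:
  fixes A B :: "'a::euclidean_space \<Rightarrow> ennreal"
  assumes [measurable]: "A \<in> borel_measurable borel" "B \<in> borel_measurable borel"
  shows "(\<integral>\<^sup>+p. A (fst p) * B (snd p) * B (- fst p - snd p) \<partial>lborel)
    \<le> 2 * (\<integral>\<^sup>+z. B z ^ 2 \<partial>lborel) * (\<integral>\<^sup>+z. A z \<partial>lborel)"
proof -
  have "(\<integral>\<^sup>+p. A (fst p) * B (snd p) * B (- fst p - snd p) \<partial>lborel)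
      = (\<integral>\<^sup>+x. A x * \<integral>\<^sup>+y. B y * B (- x - y) \<partial>lborel \<partial>lborel)"
    by (subst nn_integral_lborel_pair) (simp_all add: mult.assoc nn_integral_cmult)
  also have "\<dots> \<le> (\<integral>\<^sup>+x. A x * (2 * (\<integral>\<^sup>+z. B z ^ 2 \<partial>lborel)) \<partial>lborel)"
    by (intro nn_integral_mono mult_left_mono nn_integral_mult_reflect_le) simp_all
  also have "\<dots> = 2 * (\<integral>\<^sup>+z. B z ^ 2 \<partial>lborel) * (\<integral>\<^sup>+z. A z \<partial>lborel)"
    by (simp add: nn_integral_multc mult.commute)
  finally show ?thesis .
qed

lemma nn_integral_trilinear_sym_le:
  fixes A B :: "'a::euclidean_space \<Rightarrow> ennreal"
  assumes [measurable]: "A \<in> borel_measurable borel" "B \<in> borel_measurable borel"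
  shows "(\<integral>\<^sup>+p. A (fst p) * B (snd p) * B (- fst p - snd p)
              + B (fst p) * A (snd p) * B (- fst p - snd p)
              + B (fst p) * B (snd p) * A (- fst p - snd p) \<partial>lborel)
    \<le> 6 * (\<integral>\<^sup>+z. B z ^ 2 \<partial>lborel) * (\<integral>\<^sup>+z. A z \<partial>lborel)"
proof -
  define h where "h p = A (fst p) * B (snd p) * B (- fst p - snd p)" for p :: "'a \<times> 'a"
  have [measurable]: "h \<in> borel_measurable borel"
    unfolding h_def by measurable
  \<comment> \<open>the three terms are one term composed with measure-preserving maps of the hyperplane\<close>
  have "(\<integral>\<^sup>+p. B (fst p) * A (snd p) * B (- fst p - snd p) \<partial>lborel) = (\<integral>\<^sup>+p. h (snd p, fst p) \<partial>lborel)"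
    by (simp add: h_def ac_simps minus_diff_commute)
  also have "\<dots> = (\<integral>\<^sup>+p. h p \<partial>lborel)"
    by (rule nn_integral_lborel_pair_swap) simp
  finally have second: "(\<integral>\<^sup>+p. B (fst p) * A (snd p) * B (- fst p - snd p) \<partial>lborel) = (\<integral>\<^sup>+p. h p \<partial>lborel)" .
  have "(\<integral>\<^sup>+p. B (fst p) * B (snd p) * A (- fst p - snd p) \<partial>lborel)
      = (\<integral>\<^sup>+p. (\<lambda>q. h (snd q, fst q)) (fst p, - fst p - snd p) \<partial>lborel)"
    by (simp add: h_def algebra_simps)
  also have "\<dots> = (\<integral>\<^sup>+p. h (snd p, fst p) \<partial>lborel)"
    by (rule nn_integral_lborel_pair_shear) simp
  also have "\<dots> = (\<integral>\<^sup>+p. h p \<partial>lborel)"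
    by (rule nn_integral_lborel_pair_swap) simp
  finally have third: "(\<integral>\<^sup>+p. B (fst p) * B (snd p) * A (- fst p - snd p) \<partial>lborel) = (\<integral>\<^sup>+p. h p \<partial>lborel)" .
  have "(\<integral>\<^sup>+p. A (fst p) * B (snd p) * B (- fst p - snd p)
              + B (fst p) * A (snd p) * B (- fst p - snd p)
              + B (fst p) * B (snd p) * A (- fst p - snd p) \<partial>lborel)
      = (\<integral>\<^sup>+p. h p \<partial>lborel) + (\<integral>\<^sup>+p. h p \<partial>lborel) + (\<integral>\<^sup>+p. h p \<partial>lborel)"
    using second third by (simp add: nn_integral_add h_def)
  also have "\<dots> \<le> 2 * (\<integral>\<^sup>+z. B z ^ 2 \<partial>lborel) * (\<integral>\<^sup>+z. A z \<partial>lborel)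
      + 2 * (\<integral>\<^sup>+z. B z ^ 2 \<partial>lborel) * (\<integral>\<^sup>+z. A z \<partial>lborel)
      + 2 * (\<integral>\<^sup>+z. B z ^ 2 \<partial>lborel) * (\<integral>\<^sup>+z. A z \<partial>lborel)"
    unfolding h_def by (intro add_mono nn_integral_trilinear_le) simp_all
  also have "\<dots> = 6 * (\<integral>\<^sup>+z. B z ^ 2 \<partial>lborel) * (\<integral>\<^sup>+z. A z \<partial>lborel)"
    by (simp only: distrib_right[symmetric]) simp
  finally show ?thesis .
qed

lemma Lambda3_integrand_eq:
  "Lambda3_integrand M f1 f2 f3
    = (\<lambda>p. M (fst p) (snd p) (- fst p - snd p) * f1 (fst p) * f2 (snd p) * f3 (- fst p - snd p))"
  by (simp add: Lambda3_integrand_def fun_eq_iff split_beta)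

lemma norm_Lambda3_integrand_le:
  fixes M :: "freq \<Rightarrow> freq \<Rightarrow> freq \<Rightarrow> complex" and m w :: "freq \<Rightarrow> real"
    and f :: "freq \<Rightarrow> complex" and c :: real
  defines "F \<equiv> \<lambda>z. m z * norm (f z)"
  assumes m_nonneg: "\<And>z. 0 \<le> m z"
    and M_le: "\<And>z1 z2. norm (M z1 z2 (- z1 - z2))
      \<le> c * m z1 * m z2 * m (- z1 - z2) * (w z1 + w z2 + w (- z1 - z2))"
  shows "norm (Lambda3_integrand M f f f (x, y))
    \<le> c * (w x * F x * F y * F (- x - y) + F x * (w y * F y) * F (- x - y)
          + F x * F y * (w (- x - y) * F (- x - y)))"
proof -
  have "norm (Lambda3_integrand M f f f (x, y))
      = norm (M x y (- x - y)) * (norm (f x) * norm (f y) * norm (f (- x - y)))"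
    by (simp add: Lambda3_integrand_def norm_mult)
  also have "\<dots> \<le> c * m x * m y * m (- x - y) * (w x + w y + w (- x - y))
      * (norm (f x) * norm (f y) * norm (f (- x - y)))"
    by (intro mult_right_mono M_le) simp
  also have "\<dots> = c * (w x * F x * F y * F (- x - y) + F x * (w y * F y) * F (- x - y)
      + F x * F y * (w (- x - y) * F (- x - y)))"
    by (simp add: F_def algebra_simps)
  finally show ?thesis .
qed

lemma nn_integral_norm_Lambda3_integrand_le:
  fixes M :: "freq \<Rightarrow> freq \<Rightarrow> freq \<Rightarrow> complex" and m w :: "freq \<Rightarrow> real"
    and f :: "freq \<Rightarrow> complex" and c :: real
  defines "F \<equiv> \<lambda>z. m z * norm (f z)"
  assumes [measurable]: "f \<in> borel_measurable borel" "m \<in> borel_measurable borel"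
      "w \<in> borel_measurable borel"
    and nonneg: "\<And>z. 0 \<le> m z" "\<And>z. 0 \<le> w z" "0 \<le> c"
    and M_le: "\<And>z1 z2. norm (M z1 z2 (- z1 - z2))
      \<le> c * m z1 * m z2 * m (- z1 - z2) * (w z1 + w z2 + w (- z1 - z2))"
  shows "(\<integral>\<^sup>+p. ennreal (norm (Lambda3_integrand M f f f p)) \<partial>lborel)
    \<le> ennreal c * (6 * (\<integral>\<^sup>+z. ennreal (F z) ^ 2 \<partial>lborel) * (\<integral>\<^sup>+z. ennreal (w z * F z) \<partial>lborel))"
proof -
  define A B where "A z = ennreal (w z * F z)" and "B z = ennreal (F z)" for z
  have [measurable]: "A \<in> borel_measurable borel" "B \<in> borel_measurable borel"
    unfolding A_def B_def F_def by measurable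
  have pointwise: "ennreal (norm (Lambda3_integrand M f f f (x, y)))
      \<le> ennreal c * (A x * B y * B (- x - y) + B x * A y * B (- x - y) + B x * B y * A (- x - y))" for x y
    using ennreal_leI[OF norm_Lambda3_integrand_le[of m M c w f x y, OF nonneg(1) M_le]] nonneg
    by (simp add: A_def B_def F_def ennreal_mult ennreal_plus)
  have "(\<integral>\<^sup>+p. ennreal (norm (Lambda3_integrand M f f f p)) \<partial>lborel)
      \<le> (\<integral>\<^sup>+p. ennreal c * (A (fst p) * B (snd p) * B (- fst p - snd p)
            + B (fst p) * A (snd p) * B (- fst p - snd p)
            + B (fst p) * B (snd p) * A (- fst p - snd p)) \<partial>lborel)"
    by (intro nn_integral_mono) (metis pointwise prod.collapse)
  also have "\<dots> = ennreal c * (\<integral>\<^sup>+p. A (fst p) * B (snd p) * B (- fst p - snd p)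
            + B (fst p) * A (snd p) * B (- fst p - snd p)
            + B (fst p) * B (snd p) * A (- fst p - snd p) \<partial>lborel)"
    by (rule nn_integral_cmult) simp
  also have "\<dots> \<le> ennreal c * (6 * (\<integral>\<^sup>+z. B z ^ 2 \<partial>lborel) * (\<integral>\<^sup>+z. A z \<partial>lborel))"
    by (intro mult_left_mono nn_integral_trilinear_sym_le) simp_all
  finally show ?thesis
    by (simp add: A_def B_def)
qed

lemma Lambda3_weighted_bound:
  fixes M :: "freq \<Rightarrow> freq \<Rightarrow> freq \<Rightarrow> complex" and m w :: "freq \<Rightarrow> real"
    and f :: "freq \<Rightarrow> complex" and c :: real
  assumes [measurable]: "f \<in> borel_measurable borel" "m \<in> borel_measurable borel"
      "w \<in> borel_measurable borel" "(\<lambda>p. M (fst p) (snd p) (- fst p - snd p)) \<in> borel_measurable borel"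
    and nonneg: "\<And>z. 0 \<le> m z" "\<And>z. 0 \<le> w z" "0 \<le> c"
    and square_integrable: "integrable lborel (\<lambda>z. (norm (complex_of_real (m z) * f z))\<^sup>2)"
      "integrable lborel (\<lambda>z. w z ^ 2)"
    and M_le: "\<And>z1 z2. norm (M z1 z2 (- z1 - z2))
      \<le> c * m z1 * m z2 * m (- z1 - z2) * (w z1 + w z2 + w (- z1 - z2))"
  shows "integrable lborel (Lambda3_integrand M f f f)"
    and "norm (Lambda3 M f f f) \<le> 6 * c * sqrt (\<integral>z. w z ^ 2 \<partial>lborel) * L2norm_I m f ^ 3"
proof -
  define F where "F z = m z * norm (f z)" for z
  have F_nonneg: "0 \<le> F z" for z
    using nonneg by (simp add: F_def)
  have [measurable]: "F \<in> borel_measurable borel"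
    unfolding F_def by measurable
  have F_sq: "(norm (complex_of_real (m z) * f z))\<^sup>2 = F z ^ 2" for z
    using nonneg by (simp add: F_def norm_mult)
  have F_square_integrable: "integrable lborel (\<lambda>z. F z ^ 2)"
    using square_integrable(1) by (simp add: F_sq)
  define \<Phi> \<Psi> where "\<Phi> = (\<integral>z. F z ^ 2 \<partial>lborel)" and "\<Psi> = (\<integral>z. w z ^ 2 \<partial>lborel)"
  have \<Phi>\<Psi>_nonneg: "0 \<le> \<Phi>" "0 \<le> \<Psi>"
    by (simp_all add: \<Phi>_def \<Psi>_def)
  have L2: "L2norm_I m f = sqrt \<Phi>"
    by (simp add: L2norm_I_def F_sq \<Phi>_def)
  have "(\<integral>\<^sup>+z. ennreal (F z) ^ 2 \<partial>lborel) = ennreal \<Phi>"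
    using nn_integral_eq_integral[OF F_square_integrable] F_nonneg by (simp add: \<Phi>_def ennreal_power)
  moreover have "(\<integral>\<^sup>+z. ennreal (w z * F z) \<partial>lborel) \<le> ennreal (sqrt \<Psi> * sqrt \<Phi>)"
    unfolding \<Psi>_def \<Phi>_def
    by (rule nn_integral_mult_le_sqrt_integrals) (use nonneg F_nonneg square_integrable F_square_integrable in auto)
  ultimately have "(\<integral>\<^sup>+p. ennreal (norm (Lambda3_integrand M f f f p)) \<partial>lborel)
      \<le> ennreal c * (6 * ennreal \<Phi> * ennreal (sqrt \<Psi> * sqrt \<Phi>))"
    using nn_integral_norm_Lambda3_integrand_le[of f m w c M] nonneg M_le
    by (simp add: F_def order_trans mult_left_mono)
  also have "\<dots> = ennreal (6 * c * sqrt \<Psi> * sqrt \<Phi> ^ 3)"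
    using nonneg \<Phi>\<Psi>_nonneg by (simp add: ennreal_mult power3_eq_cube ac_simps)
  finally have bound: "(\<integral>\<^sup>+p. ennreal (norm (Lambda3_integrand M f f f p)) \<partial>lborel)
      \<le> ennreal (6 * c * sqrt \<Psi> * sqrt \<Phi> ^ 3)" .
  show integrable: "integrable lborel (Lambda3_integrand M f f f)"
    using bound by (intro integrableI_bounded) (auto simp: Lambda3_integrand_eq top_unique less_top[symmetric]
        intro: order.strict_trans1)
  have "ennreal (norm (Lambda3 M f f f)) \<le> ennreal (6 * c * sqrt \<Psi> * sqrt \<Phi> ^ 3)"
    using integral_norm_bound_ennreal[OF integrable] bound by (simp add: Lambda3_def)
  then show "norm (Lambda3 M f f f) \<le> 6 * c * sqrt \<Psi> * L2norm_I m f ^ 3"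
    using nonneg \<Phi>\<Psi>_nonneg by (simp add: L2)
qed

definition bracket_weight :: "real \<Rightarrow> freq \<Rightarrow> real" where
  "bracket_weight \<epsilon> z = max 1 \<bar>fst z\<bar> powr (- (1 + \<epsilon>) / 2) * max 1 \<bar>snd z\<bar> powr (- (1 + \<epsilon>) / 2)"

lemma bracket_weight_nonneg: "0 \<le> bracket_weight \<epsilon> z"
  by (simp add: bracket_weight_def)

lemma borel_measurable_bracket_weight [measurable]: "bracket_weight \<epsilon> \<in> borel_measurable borel"
  unfolding bracket_weight_def by measurable

lemma max_one_norm_powr_le_bracket_weight:
  assumes "0 \<le> \<epsilon>"
  shows "max 1 (norm z) powr (- 1 - \<epsilon>) \<le> bracket_weight \<epsilon> z"
proof -
  define a where "a = - (1 + \<epsilon>) / 2"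
  have a: "a \<le> 0"
    using assms by (simp add: a_def)
  have "max 1 (norm z) powr (- 1 - \<epsilon>) = max 1 (norm z) powr a * max 1 (norm z) powr a"
    by (simp add: a_def powr_add[symmetric])
  also have "\<dots> \<le> max 1 \<bar>fst z\<bar> powr a * max 1 \<bar>snd z\<bar> powr a"
    using norm_fst_le[of "fst z" "snd z"] norm_snd_le[of "snd z" "fst z"] a
    by (intro mult_mono powr_mono2') auto
  finally show ?thesis
    by (simp add: bracket_weight_def a_def)
qed

lemma square_integrable_bracket_weight:
  assumes "0 < \<epsilon>"
  shows "integrable lborel (\<lambda>z. bracket_weight \<epsilon> z ^ 2)"
proof (rule integrableI_bounded)
  define p where "p x = ennreal (max 1 \<bar>x\<bar> powr (- 1 - \<epsilon>))" for x :: real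
  have [measurable]: "p \<in> borel_measurable borel"
    unfolding p_def by measurable
  have "ennreal (norm (bracket_weight \<epsilon> z ^ 2)) = p (fst z) * p (snd z)" for z
    by (simp add: p_def bracket_weight_def power2_eq_square powr_add[symmetric] ennreal_mult[symmetric]
        ac_simps)
  then have "(\<integral>\<^sup>+z. ennreal (norm (bracket_weight \<epsilon> z ^ 2)) \<partial>lborel)
      = (\<integral>\<^sup>+x. p x \<partial>lborel) * (\<integral>\<^sup>+y. p y \<partial>lborel)"
    by (simp add: nn_integral_lborel_tensor)
  also have "\<dots> < \<infinity>"
    using nn_integral_max_one_abs_powr_finite[of "- 1 - \<epsilon>"] assms
    by (simp add: p_def ennreal_mult_less_top)
  finally show "(\<integral>\<^sup>+z. ennreal (norm (bracket_weight \<epsilon> z ^ 2)) \<partial>lborel) < \<infinity>" .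
qed simp

lemma max_one_le_dyad: "max 1 r \<le> dyad r"
proof -
  obtain n :: nat where "r \<le> 2 ^ n"
    using real_arch_pow[of 2 r] by (auto intro: less_imp_le)
  then have "r \<le> 2 ^ (LEAST n::nat. r \<le> 2 ^ n)"
    by (rule LeastI)
  then show ?thesis
    by (simp add: dyad_def)
qed

lemma mono_dyad: "mono dyad"
proof
  fix r t :: real
  assume "r \<le> t"
  obtain n :: nat where "t \<le> 2 ^ n"
    using real_arch_pow[of 2 t] by (auto intro: less_imp_le)
  then have "t \<le> 2 ^ (LEAST n::nat. t \<le> 2 ^ n)"
    by (rule LeastI)
  with \<open>r \<le> t\<close> have "(LEAST n::nat. r \<le> 2 ^ n) \<le> (LEAST n::nat. t \<le> 2 ^ n)"
    by (intro Least_le) auto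
  then show "dyad r \<le> dyad t"
    by (simp add: dyad_def)
qed

lemma borel_measurable_dyad [measurable]: "dyad \<in> borel_measurable borel"
  by (rule borel_measurable_mono[OF mono_dyad])

lemma norm_le_add_norm_if_sum_zero:
  fixes z1 z2 z3 :: "'a::real_normed_vector"
  assumes "z1 + z2 + z3 = 0"
  shows "norm z1 \<le> norm z2 + norm z3"
proof -
  have "z1 = - z2 - z3"
    using assms by (simp add: algebra_simps eq_neg_iff_add_eq_0)
  then show ?thesis
    using norm_triangle_ineq4[of "- z2" z3] by simp
qed

lemma M3_eq_0_if_multiplier_one:
  assumes "z1 + z2 + z3 = 0" "m z1 = 1" "m z2 = 1" "m z3 = 1"
  shows "M3 m z1 z2 z3 = 0"
proof -
  have "fst z1 + fst z2 + fst z3 = 0" "snd z1 + snd z2 + snd z3 = 0"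
    using arg_cong[OF assms(1), of fst] arg_cong[OF assms(1), of snd] by simp_all
  then show ?thesis
    using assms by (simp add: M3_def algebra_simps)
qed

lemma abs_M3_le:
  "\<bar>M3 m z1 z2 z3\<bar>
    \<le> 2 * (m z1 ^ 2 * max 1 (norm z1) + m z2 ^ 2 * max 1 (norm z2) + m z3 ^ 2 * max 1 (norm z3))"
proof -
  have "\<bar>m z ^ 2 * (fst z + snd z)\<bar> \<le> 2 * (m z ^ 2 * max 1 (norm z))" for z :: freq
  proof -
    have "\<bar>fst z + snd z\<bar> \<le> 2 * max 1 (norm z)"
      using norm_fst_le[of "fst z" "snd z"] norm_snd_le[of "snd z" "fst z"] by simp
    then have "m z ^ 2 * \<bar>fst z + snd z\<bar> \<le> m z ^ 2 * (2 * max 1 (norm z))"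
      by (rule mult_left_mono) simp
    then show ?thesis
      by (simp add: abs_mult ac_simps)
  qed
  moreover have "M3 m z1 z2 z3
      = m z1 ^ 2 * (fst z1 + snd z1) + m z2 ^ 2 * (fst z2 + snd z2) + m z3 ^ 2 * (fst z3 + snd z3)"
    by (simp add: M3_def)
  ultimately show ?thesis
    by (smt (verit) abs_triangle_ineq)
qed

lemma norm_sigma3_on_Omega_nr:
  assumes "(z1, z2, z3) \<in> Omega_nr N \<gamma>0"
  shows "norm (sigma3 m N \<gamma>0 z1 z2 z3)
    = 2 * \<bar>M3 m z1 z2 z3\<bar> / (9 * \<bar>fst z1 * fst z2 * fst z3 + snd z1 * snd z2 * snd z3\<bar>)"
proof -
  define P where "P = fst z1 * fst z2 * fst z3 + snd z1 * snd z2 * snd z3"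
  have "- 2 * \<i> * complex_of_real M / (3 * (3 * \<i> * complex_of_real P))
      = complex_of_real (- 2 * M / (9 * P))" for M
    by (cases "P = 0") (simp_all add: field_simps)
  then have "sigma3 m N \<gamma>0 z1 z2 z3 = complex_of_real (- 2 * M3 m z1 z2 z3 / (9 * P))"
    using assms by (simp add: sigma3_def h3_def P_def)
  then show ?thesis
    unfolding P_def[symmetric] by (simp only: norm_of_real) (simp add: abs_mult)
qed

lemma resonance_lower_bound:
  assumes "(z1, z2, z3) \<in> Omega_nr N \<gamma>0" "N < max (norm z1) (max (norm z2) (norm z3))" "0 \<le> \<gamma>0"
  shows "\<gamma>0 * (max 1 (norm z1) * max 1 (norm z2) * max 1 (norm z3))
    \<le> \<bar>fst z1 * fst z2 * fst z3 + snd z1 * snd z2 * snd z3\<bar>"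
proof -
  have "max 1 (norm z1) * max 1 (norm z2) * max 1 (norm z3) \<le> dyad (norm z1) * dyad (norm z2) * dyad (norm z3)"
    using max_one_le_dyad order_trans[OF zero_le_one] by (intro mult_mono) (auto intro: mult_nonneg_nonneg)
  then show ?thesis
    using assms by (auto simp: Omega_nr_def intro: order_trans[OF mult_left_mono])
qed

lemma borel_measurable_sigma3_hyperplane:
  assumes [measurable]: "m \<in> borel_measurable borel"
  shows "(\<lambda>p. sigma3 m N \<gamma>0 (fst p) (snd p) (- fst p - snd p)) \<in> borel_measurable borel"
proof -
  define P where "P p = fst (fst p) * fst (snd p) * fst (- fst p - snd p)
    + snd (fst p) * snd (snd p) * snd (- fst p - snd p)" for p :: "freq \<times> freq"
  have [measurable]: "P \<in> borel_measurable borel"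
    unfolding P_def by (intro borel_measurable_continuous_onI continuous_intros)
  have [measurable]: "(\<lambda>p. M3 m (fst p) (snd p) (- fst p - snd p)) \<in> borel_measurable borel"
    unfolding M3_def by simp
  have "sigma3 m N \<gamma>0 (fst p) (snd p) (- fst p - snd p)
    = (if max (norm (fst p)) (max (norm (snd p)) (norm (- fst p - snd p))) \<le> N
          \<or> \<gamma>0 * dyad (norm (fst p)) * dyad (norm (snd p)) * dyad (norm (- fst p - snd p)) \<le> \<bar>P p\<bar>
       then - 2 * \<i> * complex_of_real (M3 m (fst p) (snd p) (- fst p - snd p))
         / (3 * (3 * \<i> * complex_of_real (P p)))
       else 0)" for p
    by (simp add: sigma3_def Omega_nr_def h3_def P_def add.assoc)
  then show ?thesis
    by (simp only:) measurable
qed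

lemma one_le_two_powr_max_powr:
  fixes t \<epsilon> s :: real
  assumes "1/2 < t" "0 \<le> \<epsilon>" "\<epsilon> \<le> 1" "\<epsilon> \<le> 1 + 2 * s"
  shows "1 \<le> 2 * t powr (1 - \<epsilon>) * (max 1 t powr s)\<^sup>2"
proof (cases "t \<le> 1")
  case True
  have "1/2 \<le> (1/2 :: real) powr (1 - \<epsilon>)"
    using powr_mono'[of "1 - \<epsilon>" 1 "1/2 :: real"] assms by simp
  also have "\<dots> \<le> t powr (1 - \<epsilon>)"
    using assms by (intro powr_mono2) auto
  finally show ?thesis
    using True by simp
next
  case False
  have "1 \<le> t powr (1 - \<epsilon> + 2 * s)"
    using False assms by (intro ge_one_powr_ge_zero) auto
  also have "\<dots> = t powr (1 - \<epsilon>) * (t powr s)\<^sup>2"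
    by (simp add: powr_add[symmetric] power2_eq_square)
  finally show ?thesis
    using False by simp
qed

lemma inverse_mult_le_max_powr:
  fixes N x y \<epsilon> s :: real
  assumes N: "1 \<le> N" and \<epsilon>: "0 \<le> \<epsilon>" "\<epsilon> \<le> 1" "\<epsilon> \<le> 1 + 2 * s"
    and xy: "1 \<le> y" "y \<le> x" "N / 2 < x"
  shows "1 / (x * y) \<le> 2 * N powr (\<epsilon> - 1) * (max 1 (x / N) powr s)\<^sup>2 * y powr (- 1 - \<epsilon>)"
proof -
  define t where "t = x / N"
  have t: "1/2 < t" "x = N * t"
    using N xy by (auto simp: t_def field_simps)
  have "1 \<le> 2 * (max 1 t powr s)\<^sup>2 * t powr (1 - \<epsilon>)"
    using one_le_two_powr_max_powr[OF t(1) \<epsilon>] by (simp add: ac_simps)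
  also have "t powr (1 - \<epsilon>) = N powr (\<epsilon> - 1) * x powr (1 - \<epsilon>)"
    using N t by (simp add: powr_mult powr_add[symmetric])
  also have "x powr (1 - \<epsilon>) \<le> x * y powr (- \<epsilon>)"
    using xy(1,2) \<epsilon> by (simp add: powr_diff powr_minus divide_inverse powr_mono2 le_imp_inverse_le)
  finally have "1 \<le> 2 * (max 1 t powr s)\<^sup>2 * N powr (\<epsilon> - 1) * (x * y powr (- \<epsilon>))"
    by (simp add: mult_left_mono)
  also have "y powr (- \<epsilon>) = y * y powr (- 1 - \<epsilon>)"
    using xy powr_add[of y 1 "- 1 - \<epsilon>"] by simp
  finally show ?thesis
    using xy by (simp add: t_def field_simps)
qed

context
  fixes s :: real and \<mu> :: "real \<Rightarrow> real"
  assumes admissible: "admissible_profile s \<mu>"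
begin

lemma profile_eq_one: "0 \<le> r \<Longrightarrow> r \<le> 1 \<Longrightarrow> \<mu> r = 1"
  using admissible by (simp add: admissible_profile_def)

lemma profile_eq_powr: "2 \<le> r \<Longrightarrow> \<mu> r = r powr s"
  using admissible by (simp add: admissible_profile_def)

lemma profile_antimono: "0 \<le> r \<Longrightarrow> r \<le> t \<Longrightarrow> \<mu> t \<le> \<mu> r"
  using admissible by (simp add: admissible_profile_def)

lemma profile_le_one: "0 \<le> r \<Longrightarrow> \<mu> r \<le> 1"
  using profile_antimono[of 0 r] profile_eq_one[of 0] by simp

lemma profile_pos:
  assumes "0 \<le> r"
  shows "0 < \<mu> r"
proof -
  have "0 < max 2 r powr s"
    by (simp add: max_def)
  also have "\<dots> \<le> \<mu> r"
    using profile_antimono[of r "max 2 r"] profile_eq_powr[of "max 2 r"] assms by simp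
  finally show ?thesis .
qed

lemma profile_exponent_nonpos: "s \<le> 0"
proof -
  have "(2::real) powr s \<le> 2 powr 0"
    using profile_le_one[of 2] profile_eq_powr[of 2] by simp
  then show ?thesis
    using powr_le_cancel_iff[of 2 s 0] by simp
qed

lemma profile_lower_bound:
  assumes "- 1 \<le> s" "0 \<le> r"
  shows "max 1 r powr s / 2 \<le> \<mu> r"
proof (cases "r \<le> 2")
  case True
  have "max 1 r powr s \<le> 1"
    using profile_exponent_nonpos powr_mono[of s 0 "max 1 r"] by (simp split: if_splits)
  also have "\<dots> \<le> 2 * 2 powr s"
    using powr_mono[of "-1" s "2::real"] assms by (simp add: powr_minus)
  also have "2 powr s \<le> \<mu> r"
    using profile_antimono[of r 2] profile_eq_powr[of 2] True assms by simp
  finally show ?thesis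
    by simp
next
  case False
  then show ?thesis
    using profile_eq_powr[of r] by simp
qed

lemma borel_measurable_profile: "\<mu> \<in> borel_measurable borel"
proof -
  have "\<mu> differentiable (at x)" for x
    using admissible unfolding admissible_profile_def by (metis funpow_0)
  then show ?thesis
    by (intro borel_measurable_continuous_onI continuous_at_imp_continuous_on ballI
        differentiable_imp_continuous_within)
qed

lemma profile_high_frequency_bound:
  assumes N: "1 \<le> N" and \<epsilon>: "0 \<le> \<epsilon>" "\<epsilon> \<le> 1" "\<epsilon> \<le> 1 + 2 * s"
    and a: "0 \<le> aj" "0 \<le> al" "al \<le> ak" "N / 2 < ak"
  shows "\<mu> (aj / N) ^ 2 / (max 1 ak * max 1 al)
    \<le> 8 * N powr (\<epsilon> - 1) * \<mu> (aj / N) * \<mu> (ak / N) * \<mu> (al / N) * max 1 al powr (- 1 - \<epsilon>)"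
proof -
  define x y where "x = max 1 ak" and "y = max 1 al"
  define q where "q = max 1 (x / N) powr s"
  have xy: "1 \<le> y" "y \<le> x" "N / 2 < x"
    using a by (auto simp: x_def y_def)
  have "q / 2 \<le> \<mu> (x / N)"
    unfolding q_def using profile_lower_bound[of "x / N"] N \<epsilon> xy(1,2) by simp
  also have "\<dots> \<le> \<mu> (ak / N)"
    using N a by (intro profile_antimono) (auto simp: x_def divide_right_mono)
  finally have q_ak: "q / 2 \<le> \<mu> (ak / N)" .
  also have "\<mu> (ak / N) \<le> \<mu> (al / N)"
    using N a by (intro profile_antimono) (auto simp: divide_right_mono)
  finally have q_al: "q / 2 \<le> \<mu> (al / N)" .
  have q_pos: "0 < q"
    by (simp add: q_def)
  have "(q / 2) * (q / 2) \<le> \<mu> (ak / N) * \<mu> (al / N)"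
    using q_ak q_al q_pos by (intro mult_mono) auto
  then have "q\<^sup>2 \<le> 4 * (\<mu> (ak / N) * \<mu> (al / N))"
    by (simp add: power2_eq_square)
  then have q_sq: "2 * N powr (\<epsilon> - 1) * q\<^sup>2 \<le> 8 * N powr (\<epsilon> - 1) * (\<mu> (ak / N) * \<mu> (al / N))"
    using mult_left_mono[of "q\<^sup>2" "4 * (\<mu> (ak / N) * \<mu> (al / N))" "2 * N powr (\<epsilon> - 1)"]
    by simp
  have "\<mu> (aj / N) ^ 2 \<le> \<mu> (aj / N)"
    using profile_le_one[of "aj / N"] profile_pos[of "aj / N"] N a
    by (simp add: power2_eq_square mult_left_le)
  then have "\<mu> (aj / N) ^ 2 / (x * y) \<le> \<mu> (aj / N) * (1 / (x * y))"
    using xy by (simp add: divide_right_mono)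
  also have "\<dots> \<le> \<mu> (aj / N) * (2 * N powr (\<epsilon> - 1) * q\<^sup>2 * y powr (- 1 - \<epsilon>))"
    using profile_pos[of "aj / N"] N a inverse_mult_le_max_powr[OF N \<epsilon> xy]
    by (intro mult_left_mono) (auto simp: q_def)
  also have "\<dots> \<le> \<mu> (aj / N) * (8 * N powr (\<epsilon> - 1) * (\<mu> (ak / N) * \<mu> (al / N)) * y powr (- 1 - \<epsilon>))"
    using profile_pos[of "aj / N"] N a by (intro mult_left_mono mult_right_mono q_sq) auto
  finally show ?thesis
    by (simp add: x_def y_def ac_simps)
qed

lemma profile_high_frequency_sym_bound:
  assumes N: "1 \<le> N" and \<epsilon>: "0 \<le> \<epsilon>" "\<epsilon> \<le> 1" "\<epsilon> \<le> 1 + 2 * s"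
    and a: "0 \<le> aj" "0 \<le> ak" "0 \<le> al" "aj \<le> ak + al" "N < max aj (max ak al)"
  shows "\<mu> (aj / N) ^ 2 / (max 1 ak * max 1 al)
    \<le> 8 * N powr (\<epsilon> - 1) * \<mu> (aj / N) * \<mu> (ak / N) * \<mu> (al / N)
        * (max 1 ak powr (- 1 - \<epsilon>) + max 1 al powr (- 1 - \<epsilon>))"
proof -
  have c_nonneg: "0 \<le> 8 * N powr (\<epsilon> - 1) * \<mu> (aj / N) * \<mu> (ak / N) * \<mu> (al / N)"
    using N a profile_pos[of "aj / N"] profile_pos[of "ak / N"] profile_pos[of "al / N"] by simp
  show ?thesis
  proof (cases "al \<le> ak")
    case True
    then have "N / 2 < ak"
      using a by linarith
    with True show ?thesis
      using profile_high_frequency_bound[OF N \<epsilon>, of aj al ak] a c_nonneg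
      by (smt (verit) mult_left_mono powr_ge_zero)
  next
    case False
    then have "N / 2 < al"
      using a by linarith
    with False show ?thesis
      using profile_high_frequency_bound[OF N \<epsilon>, of aj ak al] a c_nonneg
      by (smt (verit) mult.commute mult.left_commute mult_left_mono powr_ge_zero)
  qed
qed

lemma mI_pos: "0 < N \<Longrightarrow> 0 < mI \<mu> N z"
  by (simp add: mI_def profile_pos)

lemma mI_eq_one: "0 < N \<Longrightarrow> norm z \<le> N \<Longrightarrow> mI \<mu> N z = 1"
  by (simp add: mI_def profile_eq_one)

lemma borel_measurable_mI: "mI \<mu> N \<in> borel_measurable borel"
  unfolding mI_def using borel_measurable_profile by measurable

lemma M3_high_frequency_bound:
  assumes N: "1 \<le> N" and \<epsilon>: "0 \<le> \<epsilon>" "\<epsilon> \<le> 1" "\<epsilon> \<le> 1 + 2 * s"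
    and sum: "z1 + z2 + z3 = 0" and high: "N < max (norm z1) (max (norm z2) (norm z3))"
  shows "\<bar>M3 (mI \<mu> N) z1 z2 z3\<bar> / (max 1 (norm z1) * max 1 (norm z2) * max 1 (norm z3))
    \<le> 32 * N powr (\<epsilon> - 1) * mI \<mu> N z1 * mI \<mu> N z2 * mI \<mu> N z3
        * (bracket_weight \<epsilon> z1 + bracket_weight \<epsilon> z2 + bracket_weight \<epsilon> z3)"
proof -
  define u w V where "u z = mI \<mu> N z" and "w z = max 1 (norm z)" and "V z = w z powr (- 1 - \<epsilon>)"
    for z :: freq
  define c where "c = 8 * N powr (\<epsilon> - 1) * u z1 * u z2 * u z3"
  have w: "1 \<le> w z" for z
    by (simp add: w_def)
  have c_nonneg: "0 \<le> c"
    using N mI_pos by (simp add: c_def u_def less_imp_le)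
  have tri: "norm z1 \<le> norm z2 + norm z3" "norm z2 \<le> norm z1 + norm z3" "norm z3 \<le> norm z1 + norm z2"
    using sum by (auto intro!: norm_le_add_norm_if_sum_zero simp: ac_simps)
  have "u z1 ^ 2 / (w z2 * w z3) \<le> c * (V z2 + V z3)"
    using profile_high_frequency_sym_bound[OF N \<epsilon>, of "norm z1" "norm z2" "norm z3"] tri high
    by (simp add: u_def w_def V_def c_def mI_def max.commute max.left_commute)
  moreover have "u z2 ^ 2 / (w z1 * w z3) \<le> c * (V z1 + V z3)"
    using profile_high_frequency_sym_bound[OF N \<epsilon>, of "norm z2" "norm z1" "norm z3"] tri high
    by (simp add: u_def w_def V_def c_def mI_def max.commute max.left_commute ac_simps)
  moreover have "u z3 ^ 2 / (w z1 * w z2) \<le> c * (V z1 + V z2)"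
    using profile_high_frequency_sym_bound[OF N \<epsilon>, of "norm z3" "norm z1" "norm z2"] tri high
    by (simp add: u_def w_def V_def c_def mI_def max.commute max.left_commute ac_simps)
  moreover have "(u z1 ^ 2 * w z1 + u z2 ^ 2 * w z2 + u z3 ^ 2 * w z3) / (w z1 * w z2 * w z3)
      = u z1 ^ 2 / (w z2 * w z3) + u z2 ^ 2 / (w z1 * w z3) + u z3 ^ 2 / (w z1 * w z2)"
    using w[of z1] w[of z2] w[of z3] by (simp add: field_simps)
  ultimately have "(u z1 ^ 2 * w z1 + u z2 ^ 2 * w z2 + u z3 ^ 2 * w z3) / (w z1 * w z2 * w z3)
      \<le> 2 * c * (V z1 + V z2 + V z3)"
    by (simp add: algebra_simps)
  also have "\<dots> \<le> 2 * c * (bracket_weight \<epsilon> z1 + bracket_weight \<epsilon> z2 + bracket_weight \<epsilon> z3)"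
    using \<epsilon> c_nonneg
    by (intro mult_left_mono add_mono) (simp_all add: V_def w_def max_one_norm_powr_le_bracket_weight)
  finally have "2 * (u z1 ^ 2 * w z1 + u z2 ^ 2 * w z2 + u z3 ^ 2 * w z3) / (w z1 * w z2 * w z3)
      \<le> 4 * c * (bracket_weight \<epsilon> z1 + bracket_weight \<epsilon> z2 + bracket_weight \<epsilon> z3)"
    by (simp only: times_divide_eq_right[symmetric])
  moreover have "\<bar>M3 (mI \<mu> N) z1 z2 z3\<bar> / (w z1 * w z2 * w z3)
      \<le> 2 * (u z1 ^ 2 * w z1 + u z2 ^ 2 * w z2 + u z3 ^ 2 * w z3) / (w z1 * w z2 * w z3)"
    using abs_M3_le[of "mI \<mu> N" z1 z2 z3] w[of z1] w[of z2] w[of z3]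
    by (intro divide_right_mono) (simp_all add: u_def w_def)
  ultimately show ?thesis
    by (simp add: w_def c_def u_def)
qed

lemma norm_sigma3_le:
  assumes N: "1 \<le> N" and \<epsilon>: "0 \<le> \<epsilon>" "\<epsilon> \<le> 1" "\<epsilon> \<le> 1 + 2 * s"
    and \<gamma>0: "0 < \<gamma>0" and sum: "z1 + z2 + z3 = 0"
  shows "norm (sigma3 (mI \<mu> N) N \<gamma>0 z1 z2 z3)
    \<le> 8 / \<gamma>0 * N powr (\<epsilon> - 1) * mI \<mu> N z1 * mI \<mu> N z2 * mI \<mu> N z3
        * (bracket_weight \<epsilon> z1 + bracket_weight \<epsilon> z2 + bracket_weight \<epsilon> z3)"
proof -
  define X where "X = N powr (\<epsilon> - 1) * mI \<mu> N z1 * mI \<mu> N z2 * mI \<mu> N z3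
    * (bracket_weight \<epsilon> z1 + bracket_weight \<epsilon> z2 + bracket_weight \<epsilon> z3)"
  have X_nonneg: "0 \<le> X"
    using N mI_pos bracket_weight_nonneg by (simp add: X_def less_imp_le add_nonneg_nonneg)
  consider (outside) "(z1, z2, z3) \<notin> Omega_nr N \<gamma>0"
    | (low) "max (norm z1) (max (norm z2) (norm z3)) \<le> N"
    | (high) "(z1, z2, z3) \<in> Omega_nr N \<gamma>0" "N < max (norm z1) (max (norm z2) (norm z3))"
    by linarith
  then have "norm (sigma3 (mI \<mu> N) N \<gamma>0 z1 z2 z3) \<le> 8 / \<gamma>0 * X"
  proof cases
    case outside
    then show ?thesis
      using X_nonneg \<gamma>0 by (simp add: sigma3_def)
  next
    case low
    then have "M3 (mI \<mu> N) z1 z2 z3 = 0"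
      using N sum by (intro M3_eq_0_if_multiplier_one mI_eq_one) auto
    then show ?thesis
      using X_nonneg \<gamma>0 by (simp add: sigma3_def)
  next
    case high
    define W where "W = max 1 (norm z1) * max 1 (norm z2) * max 1 (norm z3)"
    define P where "P = fst z1 * fst z2 * fst z3 + snd z1 * snd z2 * snd z3"
    have W_pos: "0 < W"
      by (simp add: W_def)
    have P_ge: "\<gamma>0 * W \<le> \<bar>P\<bar>"
      using resonance_lower_bound[OF high] \<gamma>0 by (simp add: W_def P_def)
    have "norm (sigma3 (mI \<mu> N) N \<gamma>0 z1 z2 z3) = 2 * \<bar>M3 (mI \<mu> N) z1 z2 z3\<bar> / (9 * \<bar>P\<bar>)"
      using norm_sigma3_on_Omega_nr[OF high(1)] by (simp add: P_def)
    also have "\<dots> \<le> 2 * \<bar>M3 (mI \<mu> N) z1 z2 z3\<bar> / (9 * (\<gamma>0 * W))"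
      using P_ge W_pos \<gamma>0 less_le_trans[OF mult_pos_pos[OF \<gamma>0 W_pos] P_ge]
      by (intro divide_left_mono) auto
    also have "\<dots> = 2 / (9 * \<gamma>0) * (\<bar>M3 (mI \<mu> N) z1 z2 z3\<bar> / W)"
      by simp
    also have "\<dots> \<le> 2 / (9 * \<gamma>0) * (32 * X)"
      using M3_high_frequency_bound[OF N \<epsilon> sum high(2)] \<gamma>0
      by (intro mult_left_mono) (simp_all add: W_def X_def ac_simps)
    also have "\<dots> \<le> 8 / \<gamma>0 * X"
      using X_nonneg \<gamma>0 by (simp add: field_simps)
    finally show ?thesis .
  qed
  then show ?thesis
    by (simp add: X_def mult.assoc)
qed

lemma Lambda3_sigma3_bound:
  fixes f :: "freq \<Rightarrow> complex"
  assumes N: "1 \<le> N" and \<epsilon>: "0 < \<epsilon>" "\<epsilon> \<le> 1" "\<epsilon> \<le> 1 + 2 * s" and \<gamma>0: "0 < \<gamma>0"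
    and f: "f \<in> borel_measurable lborel"
    and square_integrable: "integrable lborel (\<lambda>z. (norm (complex_of_real (mI \<mu> N z) * f z))\<^sup>2)"
  shows "integrable lborel (Lambda3_integrand (sigma3 (mI \<mu> N) N \<gamma>0) f f f)"
    and "norm (Lambda3 (sigma3 (mI \<mu> N) N \<gamma>0) f f f)
      \<le> 48 * sqrt (\<integral>z. bracket_weight \<epsilon> z ^ 2 \<partial>lborel) / \<gamma>0 * N powr (\<epsilon> - 1) * L2norm_I (mI \<mu> N) f ^ 3"
proof -
  have f_measurable: "f \<in> borel_measurable borel"
    using f by simp
  have m_nonneg: "0 \<le> mI \<mu> N z" for z
    using mI_pos N by (simp add: less_imp_le)
  have c_nonneg: "0 \<le> 8 / \<gamma>0 * N powr (\<epsilon> - 1)"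
    using \<gamma>0 by simp
  have bound: "norm (sigma3 (mI \<mu> N) N \<gamma>0 z1 z2 (- z1 - z2))
      \<le> 8 / \<gamma>0 * N powr (\<epsilon> - 1) * mI \<mu> N z1 * mI \<mu> N z2 * mI \<mu> N (- z1 - z2)
        * (bracket_weight \<epsilon> z1 + bracket_weight \<epsilon> z2 + bracket_weight \<epsilon> (- z1 - z2))" for z1 z2
    using \<epsilon> by (intro norm_sigma3_le[OF N _ _ _ \<gamma>0]) simp_all
  note weighted = Lambda3_weighted_bound[where M = "sigma3 (mI \<mu> N) N \<gamma>0",
      OF f_measurable borel_measurable_mI borel_measurable_bracket_weight
      borel_measurable_sigma3_hyperplane[OF borel_measurable_mI] m_nonneg bracket_weight_nonneg c_nonneg
      square_integrable square_integrable_bracket_weight[OF \<epsilon>(1)] bound]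
  show "integrable lborel (Lambda3_integrand (sigma3 (mI \<mu> N) N \<gamma>0) f f f)"
    by (rule weighted(1))
  show "norm (Lambda3 (sigma3 (mI \<mu> N) N \<gamma>0) f f f)
      \<le> 48 * sqrt (\<integral>z. bracket_weight \<epsilon> z ^ 2 \<partial>lborel) / \<gamma>0 * N powr (\<epsilon> - 1) * L2norm_I (mI \<mu> N) f ^ 3"
    using weighted(2) by (simp add: field_simps)
qed

end

theorem proposition3p3:
  fixes s :: real and \<mu> :: "real \<Rightarrow> real"
  assumes "- 1/13 < s" and "s < 0" and "admissible_profile s \<mu>"
  shows "\<forall>\<epsilon>>0. \<exists>C>0. \<exists>N0\<ge>1. \<forall>N\<ge>N0. \<forall>\<gamma>0. \<forall>f :: freq \<Rightarrow> complex.
           0 < \<gamma>0 \<and> \<gamma>0 < 2 powr (-30) \<and> f \<in> borel_measurable lborel \<and>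
           integrable lborel (\<lambda>z. (norm (complex_of_real (mI \<mu> N z) * f z))^2)
           \<longrightarrow> integrable lborel (Lambda3_integrand (sigma3 (mI \<mu> N) N \<gamma>0) f f f) \<and>
               norm (Lambda3 (sigma3 (mI \<mu> N) N \<gamma>0) f f f)
                 \<le> C * (1 / \<gamma>0) * N powr (-1 + \<epsilon>) * (L2norm_I (mI \<mu> N) f)^3"
proof (intro allI impI)
  fix \<epsilon> :: real
  assume "\<epsilon> > 0"
  \<comment> \<open>only \<open>e \<le> 1 + 2 * s\<close> is needed, which \<open>s > -1/13\<close> grants for every \<open>e \<le> 1/2\<close>\<close>
  define e where "e = min \<epsilon> (1/2)"
  have e: "0 < e" "e \<le> 1" "e \<le> 1 + 2 * s" "e \<le> \<epsilon>"
    using \<open>\<epsilon> > 0\<close> assms(1) by (auto simp: e_def)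
  define K where "K = 48 * sqrt (\<integral>z. bracket_weight e z ^ 2 \<partial>lborel)"
  have K_nonneg: "0 \<le> K"
    by (simp add: K_def)
  have "norm (Lambda3 (sigma3 (mI \<mu> N) N \<gamma>0) f f f)
      \<le> (K + 1) * (1 / \<gamma>0) * N powr (-1 + \<epsilon>) * L2norm_I (mI \<mu> N) f ^ 3"
    if N: "1 \<le> N" and \<gamma>0: "0 < \<gamma>0" and f: "f \<in> borel_measurable lborel"
      and square_integrable: "integrable lborel (\<lambda>z. (norm (complex_of_real (mI \<mu> N z) * f z))\<^sup>2)"
    for N \<gamma>0 and f :: "freq \<Rightarrow> complex"
  proof -
    have "N powr (e - 1) \<le> N powr (-1 + \<epsilon>)"
      using N e by (intro powr_mono) auto
    then have "K * (1 / \<gamma>0) * N powr (e - 1) * L2norm_I (mI \<mu> N) f ^ 3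
        \<le> (K + 1) * (1 / \<gamma>0) * N powr (-1 + \<epsilon>) * L2norm_I (mI \<mu> N) f ^ 3"
      using K_nonneg \<gamma>0 by (intro mult_mono mult_right_mono) (simp_all add: L2norm_I_def)
    then show ?thesis
      using Lambda3_sigma3_bound(2)[OF assms(3) N e(1-3) \<gamma>0 f square_integrable] by (simp add: K_def)
  qed
  then show "\<exists>C>0. \<exists>N0\<ge>1. \<forall>N\<ge>N0. \<forall>\<gamma>0. \<forall>f :: freq \<Rightarrow> complex.
           0 < \<gamma>0 \<and> \<gamma>0 < 2 powr (-30) \<and> f \<in> borel_measurable lborel \<and>
           integrable lborel (\<lambda>z. (norm (complex_of_real (mI \<mu> N z) * f z))^2)
           \<longrightarrow> integrable lborel (Lambda3_integrand (sigma3 (mI \<mu> N) N \<gamma>0) f f f) \<and>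
               norm (Lambda3 (sigma3 (mI \<mu> N) N \<gamma>0) f f f)
                 \<le> C * (1 / \<gamma>0) * N powr (-1 + \<epsilon>) * (L2norm_I (mI \<mu> N) f)^3"
    using K_nonneg Lambda3_sigma3_bound(1)[OF assms(3) _ e(1-3)]
    by (intro exI[of _ "K + 1"] exI[of _ 1]) auto
qed

end
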